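(* Let $(\mathbb Q;+,1,\neq)$ be the structure on the rationals where $+$ is the ternary relation $\{(x,y,z):x+y=z\}$, $1$ is the constant $1$, and $\neq$ is the binary disequality relation. Then every $\omega$-polymorphism of $(\mathbb Q;+,1,\neq)$ is a projection.
   Context: An $\omega$-polymorphism of a structure $\mathfrak A$ is a homomorphism $\mathfrak A^\kappa\to\mathfrak A$ from a direct power with $\kappa\le\omega$ (relations and constants interpreted coordinatewise). A projection is a map $A^\kappa\to A$ of the form $\bar x\mapsto x_i$. *)

theory Defs
  imports Complex_Main "HOL-Library.FuncSet"
begin

definition qpow :: "nat set \<Rightarrow> (nat \<Rightarrow> rat) set" where
  "qpow I = PiE I (\<lambda>_. UNIV)"

text \<open>Index sets of cardinality \<open>\<kappa> \<le> \<omega>\<close>: a finite ordinal \<open>{..<n}\<close> or all of \<open>\<nat>\<close>.\<close>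
definition omega_arity :: "nat set \<Rightarrow> bool" where
  "omega_arity I \<longleftrightarrow> (\<exists>n. I = {..<n}) \<or> I = UNIV"

text \<open>Homomorphism \<open>(\<rat>;+,1,\<noteq>)^I \<rightarrow> (\<rat>;+,1,\<noteq>)\<close>, relations and constant coordinatewise.\<close>
definition qpol :: "nat set \<Rightarrow> ((nat \<Rightarrow> rat) \<Rightarrow> rat) \<Rightarrow> bool" where
  "qpol I f \<longleftrightarrow>
     (\<forall>x\<in>qpow I. \<forall>y\<in>qpow I. \<forall>z\<in>qpow I.
        (\<forall>i\<in>I. x i + y i = z i) \<longrightarrow> f x + f y = f z)
   \<and> f (\<lambda>i\<in>I. 1) = 1
   \<and> (\<forall>x\<in>qpow I. \<forall>y\<in>qpow I. (\<forall>i\<in>I. x i \<noteq> y i) \<longrightarrow> f x \<noteq> f y)"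

definition is_projection :: "nat set \<Rightarrow> ((nat \<Rightarrow> rat) \<Rightarrow> rat) \<Rightarrow> bool" where
  "is_projection I f \<longleftrightarrow> (\<exists>i\<in>I. \<forall>x\<in>qpow I. f x = x i)"

end

theory Submission
  imports Defs
begin

text \<open>A polymorphism \<open>f\<close> is additive and fixes the constant tuple \<open>1\<close>, hence fixes every constant
  tuple; then preservation of \<open>\<noteq>\<close> forces \<open>f x\<close> to be one of the coordinates of \<open>x\<close>.
  Let the agreement set of \<open>x\<close> be the set of coordinates \<open>i\<close> with \<open>x i = f x\<close>. For finitely
  valued \<open>x, y\<close> and all but finitely many \<open>n\<close>, the agreement set of \<open>x + n y\<close> lies in both
  agreement sets, so a finitely valued tuple with a smallest finite agreement set yields a
  coordinate \<open>j\<close> with \<open>z j = f z\<close> for all finitely valued \<open>z\<close>; preservation of \<open>\<noteq>\<close> extends this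
  to all tuples. For arity \<open>\<omega>\<close>, some
  step tuple \<open>[N \<le> i]\<close> has value \<open>0\<close> and agreement set \<open>{..<N}\<close>: otherwise \<open>f\<close> vanishes on unit
  tuples, which contradicts preservation of \<open>\<noteq>\<close> at the tuple \<open>\<lambda>i. i\<close>.\<close>

text \<open>The unconditional \<open>restrict_apply\<close> would make the simplifier eta-expand every restricted
  tuple \<open>f (\<lambda>i\<in>I. _)\<close> into an if-expression.\<close>
declare restrict_apply [simp del] restrict_apply' [simp] restrict_cong [cong]

lemma restrict_in_qpow: "restrict g I \<in> qpow I"
  by (simp add: qpow_def)

lemma qpow_UNIV: "qpow UNIV = UNIV"
  by (simp add: qpow_def)

locale rat_polymorphism =
  fixes I :: "nat set" and f :: "(nat \<Rightarrow> rat) \<Rightarrow> rat"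
  assumes qpol: "qpol I f"
begin

definition agree_set :: "(nat \<Rightarrow> rat) \<Rightarrow> nat set" where
  "agree_set x = {i\<in>I. x i = f x}"

definition finite_valued :: "(nat \<Rightarrow> rat) set" where
  "finite_valued = {x\<in>qpow I. finite (x ` I)}"

lemma f_add:
  assumes "x \<in> qpow I" and "y \<in> qpow I"
  shows "f (\<lambda>i\<in>I. x i + y i) = f x + f y"
proof -
  have "\<forall>i\<in>I. x i + y i = (\<lambda>i\<in>I. x i + y i) i" by simp
  then show ?thesis using qpol assms restrict_in_qpow unfolding qpol_def by metis
qed

lemma f_ne: "x \<in> qpow I \<Longrightarrow> y \<in> qpow I \<Longrightarrow> \<forall>i\<in>I. x i \<noteq> y i \<Longrightarrow> f x \<noteq> f y"
  using qpol unfolding qpol_def by blast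

lemma f_one: "f (\<lambda>i\<in>I. 1) = 1"
  using qpol by (simp add: qpol_def)

lemma f_zero: "f (\<lambda>i\<in>I. 0) = 0"
  using f_add[OF restrict_in_qpow restrict_in_qpow, of "\<lambda>_. 0" "\<lambda>_. 0"]
  by simp

lemma f_scale_nat: "x \<in> qpow I \<Longrightarrow> f (\<lambda>i\<in>I. of_nat n * x i) = of_nat n * f x"
proof (induction n)
  case 0
  then show ?case using f_zero by simp
next
  case (Suc n)
  have "f (\<lambda>i\<in>I. of_nat (Suc n) * x i) = f (\<lambda>i\<in>I. of_nat n * x i + x i)"
    by (simp add: algebra_simps)
  also have "\<dots> = of_nat n * f x + f x"
    using f_add[OF restrict_in_qpow Suc.prems, of "\<lambda>i. of_nat n * x i"] Suc by simp
  finally show ?case by (simp add: algebra_simps)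
qed

lemma f_const_nat: "f (\<lambda>i\<in>I. of_nat n) = of_nat n"
  using f_scale_nat[OF restrict_in_qpow, of n "\<lambda>_. 1"] f_one by simp

lemma f_const_int: "f (\<lambda>i\<in>I. of_int p) = of_int p"
proof (cases "p \<ge> 0")
  case True
  then show ?thesis using f_const_nat[of "nat p"] by simp
next
  case False
  have "f (\<lambda>i\<in>I. 0) = f (\<lambda>i\<in>I. of_int p) + f (\<lambda>i\<in>I. - of_int p)"
    using f_add[OF restrict_in_qpow restrict_in_qpow, of "\<lambda>_. of_int p" "\<lambda>_. - of_int p"]
    by simp
  moreover have "f (\<lambda>i\<in>I. - of_int p) = - of_int p"
    using False f_const_nat[of "nat (- p)"] by simp
  ultimately show ?thesis using f_zero by simp
qed

lemma f_const: "f (\<lambda>i\<in>I. c) = c"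
proof -
  obtain p q where pq: "quotient_of c = (p, q)" by fastforce
  then have c: "c = of_int p / of_int q" and "q > 0"
    by (auto intro: quotient_of_div quotient_of_denom_pos)
  then obtain m :: nat where m: "q = int m" "m > 0" by (metis pos_int_cases)
  have "of_nat m * f (\<lambda>i\<in>I. c) = f (\<lambda>i\<in>I. of_int p)"
    using f_scale_nat[OF restrict_in_qpow, of m "\<lambda>_. c"] c m by simp
  also have "\<dots> = of_nat m * c"
    using c m by (simp add: f_const_int)
  finally show ?thesis using m by simp
qed

text \<open>Otherwise \<open>x\<close> and the constant tuple \<open>f x\<close> would be disequal in every coordinate.\<close>
lemma ex_coordinate_eq_value: "x \<in> qpow I \<Longrightarrow> \<exists>i\<in>I. x i = f x"
  using f_ne[OF _ restrict_in_qpow, of x "\<lambda>_. f x"] f_const[of "f x"] by auto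

lemma finite_valued_combination:
  assumes x: "x \<in> finite_valued" and y: "y \<in> finite_valued"
  obtains n :: nat where "(\<lambda>i\<in>I. x i + of_nat n * y i) \<in> finite_valued"
    and "agree_set (\<lambda>i\<in>I. x i + of_nat n * y i) \<subseteq> agree_set x \<inter> agree_set y"
proof -
  have xq: "x \<in> qpow I" and yq: "y \<in> qpow I" and fin: "finite (x ` I \<times> y ` I)"
    using x y by (auto simp: finite_valued_def)
  define bad where "bad = (\<lambda>(p, q). (f x - p) / (q - f y)) ` (x ` I \<times> y ` I)"
  have "finite (of_nat -` bad :: nat set)"
    using fin by (simp add: bad_def finite_vimageI inj_of_nat)
  then obtain n :: nat where n: "of_nat n \<notin> bad"
    using infinite_UNIV_nat ex_new_if_finite by blast
  let ?w = "\<lambda>i\<in>I. x i + of_nat n * y i"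
  have fw: "f ?w = f x + of_nat n * f y"
    using f_add[OF xq restrict_in_qpow, of "\<lambda>i. of_nat n * y i"] f_scale_nat[OF yq, of n]
    by simp
  have "?w ` I \<subseteq> (\<lambda>(p, q). p + of_nat n * q) ` (x ` I \<times> y ` I)" by force
  with fin have "finite (?w ` I)" by (meson finite_imageI finite_subset)
  then have "?w \<in> finite_valued" by (simp add: finite_valued_def restrict_in_qpow)
  moreover have "agree_set ?w \<subseteq> agree_set x \<inter> agree_set y"
  proof
    fix k assume "k \<in> agree_set ?w"
    then have k: "k \<in> I" "x k + of_nat n * y k = f x + of_nat n * f y"
      using fw by (auto simp: agree_set_def)
    show "k \<in> agree_set x \<inter> agree_set y"
    proof (cases "y k = f y")
      case False
      then have "of_nat n = (f x - x k) / (y k - f y)" using k(2) by (simp add: field_simps)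
      then have "of_nat n \<in> bad" unfolding bad_def using k(1) by force
      with n show ?thesis by contradiction
    qed (use k in \<open>auto simp: agree_set_def\<close>)
  qed
  ultimately show ?thesis by (rule that)
qed

text \<open>Any coordinate agreeing on a tuple with smallest finite agreement set works: combining that
  tuple with another one cannot shrink its agreement set.\<close>
lemma ex_coordinate_fixed_on_finite_valued:
  assumes "x \<in> finite_valued" and "finite (agree_set x)"
  obtains j where "j \<in> I" and "\<forall>z\<in>finite_valued. z j = f z"
proof -
  obtain m where m: "m \<in> finite_valued" "finite (agree_set m)"
    and min: "\<And>w. w \<in> finite_valued \<Longrightarrow> finite (agree_set w) \<Longrightarrow>
                    card (agree_set m) \<le> card (agree_set w)"
    using ex_has_least_nat[of "\<lambda>w. w \<in> finite_valued \<and> finite (agree_set w)" x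
        "\<lambda>w. card (agree_set w)"] assms by blast
  obtain j where j: "j \<in> agree_set m"
    using ex_coordinate_eq_value m(1) by (auto simp: finite_valued_def agree_set_def)
  have "j \<in> agree_set z" if z: "z \<in> finite_valued" for z
  proof -
    obtain n :: nat where w: "(\<lambda>i\<in>I. m i + of_nat n * z i) \<in> finite_valued"
      and sub: "agree_set (\<lambda>i\<in>I. m i + of_nat n * z i) \<subseteq> agree_set m \<inter> agree_set z"
      using finite_valued_combination[OF m(1) z] .
    have "finite (agree_set (\<lambda>i\<in>I. m i + of_nat n * z i))"
      using sub m(2) finite_subset by blast
    with sub m(2) min[OF w] have "agree_set (\<lambda>i\<in>I. m i + of_nat n * z i) = agree_set m"
      by (meson card_seteq le_infE)
    with sub j show ?thesis by blast
  qed
  with j show ?thesis by (auto simp: agree_set_def intro: that)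
qed

text \<open>For arbitrary \<open>a\<close>, the finitely valued tuple equal to \<open>f a\<close> at \<open>j\<close> and differing from \<open>a\<close>
  elsewhere would be disequal to \<open>a\<close> everywhere if \<open>f a \<noteq> a j\<close>.\<close>
lemma is_projection_if_fixed_on_finite_valued:
  assumes j: "j \<in> I" and fixed: "\<forall>z\<in>finite_valued. z j = f z"
  shows "is_projection I f"
  unfolding is_projection_def
proof (intro bexI[OF _ j] ballI)
  fix a assume a: "a \<in> qpow I"
  show "f a = a j"
  proof (rule ccontr)
    assume ne: "f a \<noteq> a j"
    define y where "y = (\<lambda>i\<in>I. if i = j then f a else if a i = 0 then 1 else (0::rat))"
    have "y ` I \<subseteq> {f a, 1, 0}" by (auto simp: y_def)
    then have "y \<in> finite_valued"
      by (auto simp: finite_valued_def y_def restrict_in_qpow intro: finite_subset)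
    with fixed j have "f y = f a" by (simp add: y_def)
    moreover have "\<forall>i\<in>I. y i \<noteq> a i" using ne by (simp add: y_def)
    ultimately show False using f_ne[OF _ a] by (simp add: y_def restrict_in_qpow)
  qed
qed

text \<open>If \<open>f\<close> sends every step tuple \<open>[N \<le> i]\<close> to \<open>1\<close>, it sends every unit tuple to \<open>0\<close>; then
  raising the constant tuple \<open>c = f (\<lambda>i. i)\<close> by one at coordinate \<open>c\<close> (if \<open>c \<in> \<nat>\<close>) gives a tuple
  with value \<open>c\<close> that is disequal to \<open>\<lambda>i. i\<close> everywhere.\<close>
lemma ex_step_tuple_value_ne_one:
  assumes I: "I = UNIV"
  shows "\<exists>N. f (\<lambda>i. if N \<le> i then 1 else 0) \<noteq> 1"
proof (rule ccontr)
  assume "\<not> ?thesis"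
  then have step: "f (\<lambda>i. if N \<le> i then 1 else 0) = 1" for N by blast
  have additive: "f (\<lambda>i. g i + h i) = f g + f h" for g h
    using f_add[of g h] by (simp add: I qpow_UNIV restrict_UNIV)
  have fixes_const: "f (\<lambda>_. c) = c" for c
    using f_const[of c] by (simp add: I restrict_UNIV)
  have unit: "f (\<lambda>i. if i = n then 1 else 0) = 0" for n
  proof -
    have "(\<lambda>i. if n \<le> i then 1 else 0 :: rat)
          = (\<lambda>i. (if i = n then 1 else 0) + (if Suc n \<le> i then 1 else 0))"
      by (auto simp: fun_eq_iff)
    then show ?thesis using additive step[of n] step[of "Suc n"] by simp
  qed
  define c where "c = f of_nat"
  define y where "y i = c + (if of_nat i = c then 1 else 0)" for i :: nat
  have "f y = c"
  proof (cases "c \<in> \<nat>")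
    case True
    then obtain n where "c = of_nat n" by (auto elim: Nats_cases)
    then have "y = (\<lambda>i. c + (if i = n then 1 else 0))" by (auto simp: y_def fun_eq_iff)
    then show ?thesis using additive[of "\<lambda>_. c"] fixes_const unit by simp
  next
    case False
    then have "y = (\<lambda>_. c)" by (auto simp: y_def fun_eq_iff)
    then show ?thesis using fixes_const by simp
  qed
  moreover have "\<forall>i. y i \<noteq> of_nat i" by (auto simp: y_def)
  ultimately show False using f_ne[of y of_nat] by (simp add: I qpow_UNIV c_def)
qed

lemma ex_finite_agree_set:
  assumes "omega_arity I"
  obtains x where "x \<in> finite_valued" and "finite (agree_set x)"
  using assms unfolding omega_arity_def
proof (elim disjE exE)
  fix n assume I: "I = {..<n}"
  show thesis
  proof (rule that)
    show "(\<lambda>i\<in>I. 1) \<in> finite_valued"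
      by (auto simp: finite_valued_def restrict_in_qpow intro: finite_subset[of _ "{1}"])
    show "finite (agree_set (\<lambda>i\<in>I. 1))"
      unfolding agree_set_def by (rule finite_subset[of _ I]) (auto simp: I)
  qed
next
  assume I: "I = UNIV"
  define t where "t N = (\<lambda>i. if N \<le> i then 1 else (0::rat))" for N :: nat
  obtain N where "f (t N) \<noteq> 1" using ex_step_tuple_value_ne_one[OF I] by (auto simp: t_def)
  moreover obtain i where "t N i = f (t N)"
    using ex_coordinate_eq_value[of "t N"] by (auto simp: I qpow_UNIV)
  ultimately have "f (t N) = 0" by (auto simp: t_def split: if_splits)
  then have "agree_set (t N) = {..<N}" unfolding agree_set_def by (auto simp: t_def I)
  moreover have "t N \<in> finite_valued" unfolding finite_valued_def
    by (auto simp: I qpow_UNIV t_def intro: finite_subset[of _ "{0, 1}"])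
  ultimately show thesis by (auto intro: that)
qed

end

theorem lemma9:
  fixes I :: "nat set" and f :: "(nat \<Rightarrow> rat) \<Rightarrow> rat"
  assumes "omega_arity I" and "qpol I f"
  shows "is_projection I f"
proof -
  interpret rat_polymorphism I f by (rule rat_polymorphism.intro) (fact assms(2))
  obtain x where "x \<in> finite_valued" and "finite (agree_set x)"
    using ex_finite_agree_set[OF assms(1)] .
  then obtain j where "j \<in> I" and "\<forall>z\<in>finite_valued. z j = f z"
    by (rule ex_coordinate_fixed_on_finite_valued)
  then show ?thesis by (rule is_projection_if_fixed_on_finite_valued)
qed

end
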